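(* Let $\mathbb{K}$ be a field, let $P_1, P_2 \in \mathbb{K}[X]$ be irreducible polynomials with $P_1' \neq 0$ and $P_2' \neq 0$, and let $k \geq 1$ be an integer. Then $\mathbb{K}[X]/(P_1^k)$ and $\mathbb{K}[X]/(P_2^k)$ are isomorphic as $\mathbb{K}$-algebras if and only if $\mathbb{K}[X]/(P_1)$ and $\mathbb{K}[X]/(P_2)$ are isomorphic as $\mathbb{K}$-algebras.
   Context: $\mathbb{K}$ is an arbitrary field; $P'$ denotes the formal derivative (for irreducible $P$, $P'\neq0$ means $P$ is separable). *)

theory Defs
  imports "HOL-Computational_Algebra.Polynomial"
begin

text \<open>The quotient algebra K[X]/(P), represented by canonical representatives
  (remainders modulo P), with the induced operations.\<close>

definition qrep :: "'a::field poly \<Rightarrow> 'a poly set" where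
  "qrep P = {r. r mod P = r}"

definition kalg_iso :: "'a::field poly \<Rightarrow> 'a poly \<Rightarrow> ('a poly \<Rightarrow> 'a poly) \<Rightarrow> bool" where
  "kalg_iso P Q f \<longleftrightarrow>
     bij_betw f (qrep P) (qrep Q) \<and>
     (\<forall>r\<in>qrep P. \<forall>s\<in>qrep P. f (r + s) = f r + f s) \<and>
     (\<forall>r\<in>qrep P. \<forall>s\<in>qrep P. f ((r * s) mod P) = (f r * f s) mod Q) \<and>
     f (1 mod P) = 1 mod Q \<and>
     (\<forall>c. \<forall>r\<in>qrep P. f (smult c r) = smult c (f r))"

definition quot_alg_isomorphic :: "'a::field poly \<Rightarrow> 'a poly \<Rightarrow> bool" where
  "quot_alg_isomorphic P Q \<longleftrightarrow> (\<exists>f. kalg_iso P Q f)"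

end

theory Submission
  imports Defs "HOL-Computational_Algebra.Polynomial_Factorial"
begin

(* A K-algebra homomorphism K[X]/(M) \<rightarrow> K[X]/(N) is the substitution X \<mapsto> g for g = f X,
   so an isomorphism amounts to substitutions X \<mapsto> g and X \<mapsto> s that are mutually inverse
   modulo M and N. Such a pair for (P1^k, P2^k) reduces to one for (P1, P2), since the
   P_i are prime. Conversely, a pair for (P1, P2) lifts in Hensel's manner: by a first-order
   Taylor expansion, separability of P1 lets us move g by P2 until P1 \<circ> g = P2 u with u
   a unit modulo P2; then r \<mapsto> r \<circ> g has kernel (P1^k) modulo P2^k, and it is
   surjective modulo P2^k by successive approximation, one power of P2 at a time. *)

lemma dvd_pcompose_diff:
  fixes a b p :: "'a::comm_ring_1 poly"
  assumes "m dvd a - b"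
  shows "m dvd pcompose p a - pcompose p b"
proof (induction p rule: pCons_induct)
  case (pCons c p)
  have "pcompose (pCons c p) a - pcompose (pCons c p) b
        = a * (pcompose p a - pcompose p b) + (a - b) * pcompose p b"
    by (simp add: pcompose_pCons algebra_simps)
  then show ?case using pCons assms by simp
qed simp

lemma dvd_power_diff:
  fixes a b :: "'a::comm_ring_1"
  assumes "m dvd a - b"
  shows "m dvd a ^ n - b ^ n"
proof (induction n)
  case (Suc n)
  have "a ^ Suc n - b ^ Suc n = a * (a ^ n - b ^ n) + (a - b) * b ^ n"
    by (simp add: algebra_simps)
  then show ?case using Suc assms by simp
qed simp

lemma pcompose_power_left:
  fixes p q :: "'a::comm_semiring_1 poly"
  shows "pcompose (p ^ n) q = pcompose p q ^ n"
  by (induction n) (simp_all add: pcompose_1 pcompose_mult)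

lemma pcompose_taylor_dvd:
  fixes a t p :: "'a::idom poly"
  shows "t ^ 2 dvd pcompose p (a + t) - pcompose p a - t * pcompose (pderiv p) a"
proof (induction p rule: pCons_induct)
  case (pCons c p)
  have "pcompose (pCons c p) (a + t) - pcompose (pCons c p) a
          - t * pcompose (pderiv (pCons c p)) a
        = a * (pcompose p (a + t) - pcompose p a - t * pcompose (pderiv p) a)
          + t * (pcompose p (a + t) - pcompose p a)"
    by (simp add: pcompose_pCons pderiv_pCons pcompose_add algebra_simps)
  moreover have "t dvd pcompose p (a + t) - pcompose p a"
    by (rule dvd_pcompose_diff) simp
  then have "t ^ 2 dvd t * (pcompose p (a + t) - pcompose p a)"
    by (simp add: power2_eq_square)
  ultimately show ?case using pCons by simp
qed simp

lemma pcompose_pcompose_cancel_dvd: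
  fixes a g s :: "'a::comm_ring_1 poly"
  assumes "n dvd pcompose s g - [:0, 1:]"
  shows "n dvd pcompose (pcompose a s) g - a"
  using dvd_pcompose_diff[OF assms, of a] by (simp add: pcompose_assoc)

lemma pcompose_mod_mod:
  fixes m n g r :: "'a::field poly"
  assumes "n dvd pcompose m g"
  shows "pcompose (r mod m) g mod n = pcompose r g mod n"
proof -
  have "pcompose r g - pcompose (r mod m) g = pcompose (r div m) g * pcompose m g"
    by (metis add_diff_cancel_right' div_mult_mod_eq pcompose_add pcompose_mult)
  then have "n dvd pcompose r g - pcompose (r mod m) g"
    using assms by simp
  then show ?thesis by (simp add: mod_eq_dvd_iff dvd_diff_commute)
qed

lemma dvd_pderiv_imp_pderiv_eq_0:
  fixes p :: "'a::idom poly"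
  assumes "p dvd pderiv p"
  shows "pderiv p = 0"
proof (rule ccontr)
  assume nz: "pderiv p \<noteq> 0"
  then have "degree p \<noteq> 0"
    by (metis degree_eq_zeroE pderiv_singleton)
  moreover have "degree p \<le> degree (pderiv p)"
    using assms nz by (rule dvd_imp_degree_le)
  moreover have "degree (pderiv p) \<le> degree p - 1"
    by (rule degree_le) (simp add: coeff_eq_0 coeff_pderiv)
  ultimately show False by simp
qed

lemma euclidean_bezout:
  fixes a b :: "'a::euclidean_ring"
  shows "\<exists>d x y. d dvd a \<and> d dvd b \<and> x * a + y * b = d"
proof (induction b arbitrary: a rule: measure_induct_rule[where f = euclidean_size])
  case (less b)
  show ?case
  proof (cases "b = 0")
    case True
    then show ?thesis by (metis dvd_0_right dvd_refl mult_1 add_0_right)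
  next
    case False
    obtain d x y where d: "d dvd b" "d dvd a mod b" and xy: "x * b + y * (a mod b) = d"
      using less.IH[OF mod_size_less[OF False]] by blast
    have "d dvd a"
      using d by (metis div_mult_mod_eq dvd_add dvd_mult)
    moreover have "y * a + (x - y * (a div b)) * b = d"
      using xy by (simp add: minus_div_mult_eq_mod[symmetric] algebra_simps)
    ultimately show ?thesis using d by blast
  qed
qed

lemma irreducible_inverse_mod:
  fixes q a :: "'a::euclidean_ring"
  assumes irr: "irreducible q" and "\<not> q dvd a"
  obtains x where "q dvd a * x - 1"
proof -
  obtain d x y where d: "d dvd a" "d dvd q" and xy: "x * a + y * q = d"
    using euclidean_bezout by blast
  obtain c where c: "q = d * c" using d(2) by (rule dvdE)
  have "\<not> is_unit c"
  proof
    assume "is_unit c"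
    then have "q dvd d" using c by (simp add: mult_unit_dvd_iff)
    then show False using d(1) \<open>\<not> q dvd a\<close> by (blast intro: dvd_trans)
  qed
  then have "is_unit d" using irr c by (auto dest: irreducibleD)
  then obtain e where e: "d * e = 1" by (metis dvdE)
  have "(x * a + y * q) * e = 1"
    using xy e by simp
  then have "a * (x * e) - 1 = a * (x * e) - (x * a + y * q) * e"
    by simp
  also have "\<dots> = q * - (y * e)"
    by (simp add: algebra_simps)
  finally show ?thesis by (intro that[of "x * e"]) simp
qed

subsection \<open>Algebra homomorphisms between quotients are substitutions\<close>

definition kalg_hom :: "'a::field poly \<Rightarrow> 'a poly \<Rightarrow> ('a poly \<Rightarrow> 'a poly) \<Rightarrow> bool" where
  "kalg_hom M N f \<longleftrightarrow>
     (\<forall>r\<in>qrep M. \<forall>s\<in>qrep M. f (r + s) = f r + f s) \<and>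
     (\<forall>r\<in>qrep M. \<forall>s\<in>qrep M. f ((r * s) mod M) = (f r * f s) mod N) \<and>
     f (1 mod M) = 1 mod N \<and>
     (\<forall>c. \<forall>r\<in>qrep M. f (smult c r) = smult c (f r))"

lemma kalg_iso_iff: "kalg_iso M N f \<longleftrightarrow> bij_betw f (qrep M) (qrep N) \<and> kalg_hom M N f"
  unfolding kalg_iso_def kalg_hom_def by blast

lemma mod_in_qrep [simp]: "r mod M \<in> qrep M"
  unfolding qrep_def by simp

lemma kalg_hom_pcompose:
  fixes M N g :: "'a::field poly"
  assumes "N dvd pcompose M g"
  shows "kalg_hom M N (\<lambda>r. pcompose r g mod N)"
  unfolding kalg_hom_def
proof (intro conjI ballI allI)
  fix r s :: "'a poly"
  show "pcompose (r + s) g mod N = pcompose r g mod N + pcompose s g mod N"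
    by (simp add: pcompose_add poly_mod_add_left)
  show "pcompose ((r * s) mod M) g mod N = (pcompose r g mod N * (pcompose s g mod N)) mod N"
    using pcompose_mod_mod[OF assms, of "r * s"] by (simp add: pcompose_mult mod_mult_eq)
next
  show "pcompose (1 mod M) g mod N = 1 mod N"
    using pcompose_mod_mod[OF assms, of 1] by (simp add: pcompose_1)
qed (simp add: pcompose_smult mod_smult_left)

lemma kalg_hom_eq_pcompose:
  fixes M N :: "'a::field poly"
  assumes hom: "kalg_hom M N f"
  shows "f (r mod M) = pcompose r (f ([:0, 1:] mod M)) mod N"
proof -
  let ?X = "[:0, 1:] :: 'a poly" and ?g = "f ([:0, 1:] mod M)"
  have add: "f (r + s) = f r + f s" if "r \<in> qrep M" "s \<in> qrep M" for r s
    using hom that unfolding kalg_hom_def by blast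
  have mult: "f ((r mod M) * (s mod M) mod M) = (f (r mod M) * f (s mod M)) mod N" for r s
    using hom unfolding kalg_hom_def by simp
  have smult: "f (smult c (1 mod M)) = smult c (1 mod N)" for c
    using hom unfolding kalg_hom_def by simp
  show ?thesis
  proof (induction r rule: pCons_induct)
    case 0
    have "f (0 + 0) = f 0 + f 0"
      by (rule add) (simp_all add: qrep_def)
    then have "f 0 = 0"
      by (metis add.right_neutral add_left_cancel)
    then show ?case by simp
  next
    case (pCons c p)
    have "pCons c p = smult c 1 + ?X * p"
      by (simp add: one_pCons)
    then have "pCons c p mod M = smult c (1 mod M) + (?X mod M) * (p mod M) mod M"
      by (simp only: poly_mod_add_left mod_smult_left mod_mult_eq)
    then have "f (pCons c p mod M) = smult c (1 mod N) + (?g * (pcompose p ?g mod N)) mod N"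
      using add[of "smult c (1 mod M)" "(?X mod M) * (p mod M) mod M"] mult[of ?X p] smult pCons
      by (simp add: qrep_def mod_smult_left)
    also have "\<dots> = (smult c 1 + ?g * pcompose p ?g) mod N"
      by (simp only: poly_mod_add_left mod_smult_left mod_mult_right_eq)
    also have "\<dots> = pcompose (pCons c p) ?g mod N"
      by (simp add: pcompose_pCons)
    finally show ?case .
  qed
qed

subsection \<open>Isomorphisms as mutually inverse substitutions\<close>

definition inverse_substitutions ::
    "'a::comm_ring_1 poly \<Rightarrow> 'a poly \<Rightarrow> 'a poly \<Rightarrow> 'a poly \<Rightarrow> bool" where
  "inverse_substitutions M N g s \<longleftrightarrow>
     N dvd pcompose M g \<and> M dvd pcompose N s \<and>
     N dvd pcompose s g - [:0, 1:] \<and> M dvd pcompose g s - [:0, 1:]"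

lemma inverse_substitutions_sym:
  "inverse_substitutions M N g s \<longleftrightarrow> inverse_substitutions N M s g"
  unfolding inverse_substitutions_def by blast

lemma inverse_substitutions_dvd_pcompose_iff:
  fixes M N g s r :: "'a::comm_ring_1 poly"
  assumes "inverse_substitutions M N g s"
  shows "N dvd pcompose r g \<longleftrightarrow> M dvd r"
proof
  assume "N dvd pcompose r g"
  then obtain z where "pcompose r g = N * z" by (rule dvdE)
  then have "M dvd pcompose (pcompose r g) s"
    using assms unfolding inverse_substitutions_def by (simp add: pcompose_mult)
  moreover have "M dvd pcompose (pcompose r g) s - r"
    using assms unfolding inverse_substitutions_def by (simp add: pcompose_pcompose_cancel_dvd)
  ultimately have "M dvd pcompose (pcompose r g) s - (pcompose (pcompose r g) s - r)"
    by (rule dvd_diff)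
  then show "M dvd r" by simp
next
  assume "M dvd r"
  then obtain e where "r = M * e" by (rule dvdE)
  then show "N dvd pcompose r g"
    using assms unfolding inverse_substitutions_def by (simp add: pcompose_mult)
qed

lemma inverse_substitutionsI:
  fixes M N g s :: "'a::comm_ring_1 poly"
  assumes "N dvd pcompose M g" and ker: "\<And>b. N dvd pcompose b g \<Longrightarrow> M dvd b"
    and sg: "N dvd pcompose s g - [:0, 1:]"
  shows "inverse_substitutions M N g s"
proof -
  have "N dvd (pcompose (pcompose N s) g - N) + N"
    using pcompose_pcompose_cancel_dvd[OF sg, of N] by (rule dvd_add) simp
  then have "N dvd pcompose (pcompose N s) g" by simp
  moreover have "N dvd pcompose (pcompose g s - [:0, 1:]) g"
    using pcompose_pcompose_cancel_dvd[OF sg, of g] by (simp add: pcompose_diff pcompose_pCons)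
  ultimately show ?thesis
    using assms unfolding inverse_substitutions_def by blast
qed

lemma inverse_substitutions_pcompose_mod_inverse:
  fixes M N g s r :: "'a::field poly"
  assumes subst: "inverse_substitutions M N g s" and "r \<in> qrep M"
  shows "pcompose (pcompose r g mod N) s mod M = r"
proof -
  have Ns: "M dvd pcompose N s" and gs: "M dvd pcompose g s - [:0, 1:]"
    using subst unfolding inverse_substitutions_def by blast+
  have "pcompose (pcompose r g mod N) s mod M = pcompose (pcompose r g) s mod M"
    using Ns by (rule pcompose_mod_mod)
  also have "\<dots> = r mod M"
    using pcompose_pcompose_cancel_dvd[OF gs, of r] by (simp add: mod_eq_dvd_iff)
  also have "\<dots> = r"
    using \<open>r \<in> qrep M\<close> unfolding qrep_def by simp
  finally show ?thesis .
qed

lemma kalg_iso_pcompose: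
  fixes M N g s :: "'a::field poly"
  assumes subst: "inverse_substitutions M N g s"
  shows "kalg_iso M N (\<lambda>r. pcompose r g mod N)"
  unfolding kalg_iso_iff
proof
  have "\<forall>r\<in>qrep M. pcompose (pcompose r g mod N) s mod M = r"
    and "\<forall>r\<in>qrep N. pcompose (pcompose r s mod M) g mod N = r"
    using inverse_substitutions_pcompose_mod_inverse[OF subst]
      inverse_substitutions_pcompose_mod_inverse[OF inverse_substitutions_sym[THEN iffD1, OF subst]]
    by blast+
  moreover have "(\<lambda>r. pcompose r g mod N) ` qrep M \<subseteq> qrep N"
    and "(\<lambda>r. pcompose r s mod M) ` qrep N \<subseteq> qrep M"
    by auto
  ultimately show "bij_betw (\<lambda>r. pcompose r g mod N) (qrep M) (qrep N)"
    by (rule bij_betw_byWitness)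
  have "N dvd pcompose M g"
    using subst unfolding inverse_substitutions_def by blast
  then show "kalg_hom M N (\<lambda>r. pcompose r g mod N)"
    by (rule kalg_hom_pcompose)
qed

lemma kalg_iso_imp_inverse_substitutions:
  fixes M N :: "'a::field poly"
  assumes iso: "kalg_iso M N f"
  obtains g s where "inverse_substitutions M N g s"
proof -
  let ?X = "[:0, 1:] :: 'a poly"
  define g where "g = f (?X mod M)"
  have inj: "inj_on f (qrep M)" and img: "f ` qrep M = qrep N"
    using iso unfolding kalg_iso_iff bij_betw_def by blast+
  have f: "f (r mod M) = pcompose r g mod N" for r
    using iso unfolding kalg_iso_iff g_def by (blast intro: kalg_hom_eq_pcompose)
  have f0: "f 0 = 0"
    using f[of 0] by simp
  have ker: "M dvd b" if "N dvd pcompose b g" for b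
  proof -
    have "f (b mod M) = f (0 mod M)"
      using that by (simp add: f f0 dvd_eq_mod_eq_0)
    then have "b mod M = 0 mod M"
      by (rule inj_onD[OF inj]) (rule mod_in_qrep)+
    then show ?thesis by (simp add: dvd_eq_mod_eq_0)
  qed
  have Mg: "N dvd pcompose M g"
    using f[of M] f0 by (simp add: dvd_eq_mod_eq_0)
  have "?X mod N \<in> f ` qrep M"
    using img by simp
  then obtain s where "?X mod N = f s" and "s \<in> qrep M"
    by (rule imageE)
  then have "f (s mod M) = ?X mod N"
    unfolding qrep_def by simp
  then have "N dvd pcompose s g - ?X"
    by (simp add: f mod_eq_dvd_iff)
  with Mg ker have "inverse_substitutions M N g s"
    by (blast intro: inverse_substitutionsI)
  then show ?thesis by (rule that)
qed

lemma quot_alg_isomorphic_iff_inverse_substitutions: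
  fixes M N :: "'a::field poly"
  shows "quot_alg_isomorphic M N \<longleftrightarrow> (\<exists>g s. inverse_substitutions M N g s)"
proof
  assume "quot_alg_isomorphic M N"
  then obtain f where "kalg_iso M N f"
    unfolding quot_alg_isomorphic_def by blast
  then obtain g s where "inverse_substitutions M N g s"
    by (rule kalg_iso_imp_inverse_substitutions)
  then show "\<exists>g s. inverse_substitutions M N g s" by blast
next
  assume "\<exists>g s. inverse_substitutions M N g s"
  then obtain g s where "inverse_substitutions M N g s" by blast
  then have "kalg_iso M N (\<lambda>r. pcompose r g mod N)"
    by (rule kalg_iso_pcompose)
  then show "quot_alg_isomorphic M N"
    unfolding quot_alg_isomorphic_def by blast
qed

lemma inverse_substitutions_of_powers:
  fixes P Q g s :: "'a::comm_ring_1 poly"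
  assumes "prime_elem P" and "prime_elem Q" and "k \<noteq> 0"
    and subst: "inverse_substitutions (P ^ k) (Q ^ k) g s"
  shows "inverse_substitutions P Q g s"
proof -
  have P: "P dvd P ^ k" and Q: "Q dvd Q ^ k"
    using \<open>k \<noteq> 0\<close> by (simp_all add: dvd_power)
  from subst have Pg: "Q ^ k dvd pcompose (P ^ k) g" and Qs: "P ^ k dvd pcompose (Q ^ k) s"
    and sg: "Q ^ k dvd pcompose s g - [:0, 1:]" and gs: "P ^ k dvd pcompose g s - [:0, 1:]"
    unfolding inverse_substitutions_def by blast+
  have "Q dvd pcompose P g ^ k" and "P dvd pcompose Q s ^ k"
    using dvd_trans[OF Q Pg] dvd_trans[OF P Qs] by (simp_all add: pcompose_power_left)
  then have "Q dvd pcompose P g" and "P dvd pcompose Q s"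
    using assms(1,2) prime_elem_dvd_power by blast+
  then show ?thesis
    using dvd_trans[OF Q sg] dvd_trans[OF P gs] unfolding inverse_substitutions_def by blast
qed

subsection \<open>Lifting inverse substitutions to prime powers\<close>

lemma inverse_substitutions_cong:
  fixes M N g g' s :: "'a::comm_ring_1 poly"
  assumes subst: "inverse_substitutions M N g s" and "N dvd g' - g"
  shows "inverse_substitutions M N g' s"
proof (rule inverse_substitutionsI)
  have cong: "N dvd pcompose b g' - pcompose b g" for b
    using \<open>N dvd g' - g\<close> by (rule dvd_pcompose_diff)
  have iff: "N dvd pcompose b g' \<longleftrightarrow> N dvd pcompose b g" for b
    using dvd_add_right_iff[OF cong[of b], of "pcompose b g"] by simp
  show "N dvd pcompose M g'"
    using subst iff[of M] by (simp add: inverse_substitutions_dvd_pcompose_iff)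
  show "M dvd b" if "N dvd pcompose b g'" for b
    using subst that iff[of b] by (simp add: inverse_substitutions_dvd_pcompose_iff)
  have "N dvd pcompose s g - [:0, 1:]"
    using subst unfolding inverse_substitutions_def by blast
  with cong[of s] have "N dvd (pcompose s g' - pcompose s g) + (pcompose s g - [:0, 1:])"
    by (rule dvd_add)
  then show "N dvd pcompose s g' - [:0, 1:]"
    by (simp only: add_diff_eq diff_add_cancel)
qed

lemma inverse_substitutions_not_dvd_pderiv:
  fixes P Q g s :: "'a::idom poly"
  assumes "inverse_substitutions P Q g s" and "pderiv P \<noteq> 0"
  shows "\<not> Q dvd pcompose (pderiv P) g"
proof
  assume "Q dvd pcompose (pderiv P) g"
  then have "P dvd pderiv P"
    using assms(1) inverse_substitutions_dvd_pcompose_iff by blast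
  then show False
    using assms(2) dvd_pderiv_imp_pderiv_eq_0 by blast
qed

lemma inverse_substitutions_unramified:
  fixes P Q g s :: "'a::idom poly"
  assumes "Q \<noteq> 0" and "pderiv P \<noteq> 0" and subst: "inverse_substitutions P Q g s"
  obtains g' where "inverse_substitutions P Q g' s" and "\<not> Q ^ 2 dvd pcompose P g'"
proof (cases "Q ^ 2 dvd pcompose P g")
  case True
  have "inverse_substitutions P Q (g + Q) s"
    using subst by (rule inverse_substitutions_cong) simp
  moreover have "\<not> Q ^ 2 dvd pcompose P (g + Q)"
  proof
    assume "Q ^ 2 dvd pcompose P (g + Q)"
    then have "Q ^ 2 dvd pcompose P (g + Q) - pcompose P g"
      using True by (rule dvd_diff)
    then have "Q ^ 2 dvd (pcompose P (g + Q) - pcompose P g)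
        - (pcompose P (g + Q) - pcompose P g - Q * pcompose (pderiv P) g)"
      using pcompose_taylor_dvd[of Q P g] by (rule dvd_diff)
    then have "Q * Q dvd Q * pcompose (pderiv P) g"
      by (simp add: power2_eq_square)
    then show False
      using \<open>Q \<noteq> 0\<close> inverse_substitutions_not_dvd_pderiv[OF subst \<open>pderiv P \<noteq> 0\<close>] by simp
  qed
  ultimately show thesis by (rule that)
qed (use subst that in blast)

lemma inverse_substitutions_lift_kernel:
  fixes P Q g s u b :: "'a::idom poly"
  assumes Q: "prime_elem Q" and subst: "inverse_substitutions P Q g s"
    and u: "pcompose P g = Q * u" and "\<not> Q dvd u" and "Q ^ k dvd pcompose b g"
  shows "P ^ k dvd b"
proof -
  have "P ^ j dvd b" if "j \<le> k" for j
    using that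
  proof (induction j)
    case (Suc j)
    then have "P ^ j dvd b" by simp
    then obtain e where e: "b = P ^ j * e" by (rule dvdE)
    have "Q ^ j * Q dvd pcompose b g"
      using Suc.prems assms(5) by (metis le_imp_power_dvd dvd_trans power_Suc2)
    moreover have "pcompose b g = Q ^ j * (u ^ j * pcompose e g)"
      by (simp add: e u pcompose_mult pcompose_power_left power_mult_distrib)
    ultimately have "Q dvd u ^ j * pcompose e g"
      using Q by (simp add: prime_elem_not_zeroI)
    moreover have "\<not> Q dvd u ^ j"
      using Q \<open>\<not> Q dvd u\<close> prime_elem_dvd_power by blast
    ultimately have "Q dvd pcompose e g"
      using Q prime_elem_dvd_mult_iff by blast
    then have "P dvd e"
      using subst by (simp add: inverse_substitutions_dvd_pcompose_iff)
    then show ?case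
      by (simp add: e power_Suc2 mult_dvd_mono)
  qed simp
  then show ?thesis by blast
qed

lemma inverse_substitutions_lift_surj:
  fixes P Q g s u x a :: "'a::comm_ring_1 poly"
  assumes subst: "inverse_substitutions P Q g s"
    and u: "pcompose P g = Q * u" and x: "Q dvd u * x - 1"
  shows "\<exists>b. Q ^ j dvd a - pcompose b g"
proof (induction j)
  case (Suc j)
  then obtain b where "Q ^ j dvd a - pcompose b g" by blast
  then obtain e where e: "a - pcompose b g = Q ^ j * e" by (rule dvdE)
  define c where "c = pcompose (x ^ j * e) s"
  have "Q dvd pcompose c g - x ^ j * e"
    using subst unfolding c_def inverse_substitutions_def by (simp add: pcompose_pcompose_cancel_dvd)
  moreover have "Q dvd (u * x) ^ j - 1"
    using dvd_power_diff[OF x] by simp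
  moreover have "e - u ^ j * pcompose c g
      = - (((u * x) ^ j - 1) * e) - u ^ j * (pcompose c g - x ^ j * e)"
    by (simp add: algebra_simps power_mult_distrib)
  ultimately have "Q dvd e - u ^ j * pcompose c g"
    by simp
  moreover have "a - pcompose (b + P ^ j * c) g = Q ^ j * (e - u ^ j * pcompose c g)"
    using e by (simp add: u pcompose_add pcompose_mult pcompose_power_left power_mult_distrib
        algebra_simps)
  ultimately have "Q ^ Suc j dvd a - pcompose (b + P ^ j * c) g"
    by (simp only: power_Suc2 mult_dvd_mono dvd_refl)
  then show ?case by blast
qed simp

lemma inverse_substitutions_lift:
  fixes P Q g s :: "'a::field poly"
  assumes Q: "irreducible Q" and subst: "inverse_substitutions P Q g s"
    and unramified: "\<not> Q ^ 2 dvd pcompose P g"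
  shows "\<exists>s'. inverse_substitutions (P ^ k) (Q ^ k) g s'"
proof -
  obtain u where u: "pcompose P g = Q * u"
    using subst unfolding inverse_substitutions_def by (blast elim: dvdE)
  have "\<not> Q dvd u"
    using unramified u by (auto simp: power2_eq_square)
  then obtain x where x: "Q dvd u * x - 1"
    using Q irreducible_inverse_mod by blast
  obtain s' where s': "Q ^ k dvd [:0, 1:] - pcompose s' g"
    using inverse_substitutions_lift_surj[OF subst u x] by blast
  have kernel: "P ^ k dvd b" if "Q ^ k dvd pcompose b g" for b
    using field_poly_irreducible_imp_prime[OF Q] subst u \<open>\<not> Q dvd u\<close> that
    by (rule inverse_substitutions_lift_kernel)
  have Pg: "Q ^ k dvd pcompose (P ^ k) g"
    by (simp add: u pcompose_power_left power_mult_distrib)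
  have sg: "Q ^ k dvd pcompose s' g - [:0, 1:]"
    using s' by (subst dvd_diff_commute)
  have "inverse_substitutions (P ^ k) (Q ^ k) g s'"
    by (intro inverse_substitutionsI) (rule Pg, erule kernel, rule sg)
  then show ?thesis by blast
qed

lemma inverse_substitutions_power:
  fixes P Q g s :: "'a::field poly"
  assumes "irreducible Q" and "pderiv P \<noteq> 0" and "inverse_substitutions P Q g s"
  shows "\<exists>g s. inverse_substitutions (P ^ k) (Q ^ k) g s"
proof -
  have "Q \<noteq> 0" using \<open>irreducible Q\<close> by auto
  then obtain g' where "inverse_substitutions P Q g' s" "\<not> Q ^ 2 dvd pcompose P g'"
    using assms(2,3) by (rule inverse_substitutions_unramified)
  then show ?thesis
    using inverse_substitutions_lift[OF \<open>irreducible Q\<close>] by blast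
qed

theorem mainTheorem7:
  fixes P1 P2 :: "'a::field poly" and k :: nat
  assumes "irreducible P1" and "irreducible P2"
    and "pderiv P1 \<noteq> 0" and "pderiv P2 \<noteq> 0"
    and "k \<ge> 1"
  shows "quot_alg_isomorphic (P1 ^ k) (P2 ^ k) \<longleftrightarrow> quot_alg_isomorphic P1 P2"
proof -
  have prime: "prime_elem P1" "prime_elem P2"
    using assms(1,2) by (simp_all add: field_poly_irreducible_imp_prime)
  have "k \<noteq> 0" using \<open>k \<ge> 1\<close> by simp
  have "quot_alg_isomorphic (P1 ^ k) (P2 ^ k)
      \<longleftrightarrow> (\<exists>g s. inverse_substitutions (P1 ^ k) (P2 ^ k) g s)"
    by (rule quot_alg_isomorphic_iff_inverse_substitutions)
  also have "\<dots> \<longleftrightarrow> (\<exists>g s. inverse_substitutions P1 P2 g s)"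
    using inverse_substitutions_of_powers[OF prime \<open>k \<noteq> 0\<close>]
      inverse_substitutions_power[OF assms(2,3)] by blast
  also have "\<dots> \<longleftrightarrow> quot_alg_isomorphic P1 P2"
    by (rule quot_alg_isomorphic_iff_inverse_substitutions[symmetric])
  finally show ?thesis .
qed

end
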